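(* Let $\mathcal{L}:\mathbb{R}^d\to\mathbb{R}$ be differentiable, bounded below by a constant $\mathcal{L}^*$, and with $\nabla\mathcal{L}$ Lipschitz continuous with constant $L$. Run full-batch MoFO (as defined in the context) from an arbitrary initial point $\theta_0\in\mathbb{R}^d$ with hyperparameters $0<\beta_1<\sqrt{\beta_2}<1$ and learning rate schedule $\eta_t=\eta/\sqrt{t}$ for some $\eta>0$. Then $$\min_{0\le t\le T-1}\|\nabla\mathcal{L}(\theta_t)\|_\infty=\mathcal{O}\!\left(\frac{\log T}{\sqrt{T}}\right)\quad\text{as } T\to\infty.$$
   Context: The coordinates of $\mathbb{R}^d$ are partitioned into $B$ blocks of sizes $d_1,\dots,d_B$ with $\sum_k d_k=d$; write $z=(z^{(1)},\dots,z^{(B)})$ with $z^{(k)}\in\mathbb{R}^{d_k}$. Fix an update fraction $\alpha\%\in(0,1]$. For $z\in\mathbb{R}^d$, the top-$\alpha\%$ filter $\texttt{FLT}_\alpha(z)\in\{0,1\}^d$ is defined blockwise: in block $k$ it equals $1$ exactly on a set $S_k$ of $\lceil d_k\cdot\alpha\%\rceil$ indices $i$ whose values $|z^{(k)}_i|$ are the largest in that block (ties broken in favour of smaller indices), and $0$ elsewhere. Full-batch MoFO with hyperparameters $\beta_1,\beta_2\in(0,1)$, learning rates $\eta_t>0$ and initial point $\theta_0$: set $m_0=v_0=0\in\mathbb{R}^d$; for $t\ge1$, $g_t=\nabla\mathcal{L}(\theta_{t-1})$, $m_t=\beta_1m_{t-1}+(1-\beta_1)g_t$, $v_t=\beta_2v_{t-1}+(1-\beta_2)g_t\odot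 g_t$, $\hat m_t=m_t/(1-\beta_1^t)$, $\hat v_t=v_t/(1-\beta_2^t)$, and $\theta_t=\theta_{t-1}-\eta_t\,(\hat m_t\odot\texttt{FLT}_\alpha(m_t))/\sqrt{\hat v_t}$ (entrywise division, no $\epsilon$ term; if $\hat v_{i,t}=0$ then $\hat m_{i,t}=0$ and the corresponding quotient is taken to be $0$). $\odot$ is the entrywise product. *)

theory Defs
  imports "HOL-Analysis.Analysis" "HOL-Library.Landau_Symbols"
begin

text \<open>Coordinates are indexed by a finite linearly ordered type 'n (so d = CARD('n)).
  The block structure is given by blk :: 'n => nat, assumed monotone, so that blocks are
  contiguous index ranges.\<close>

definition block_of :: "('n \<Rightarrow> nat) \<Rightarrow> 'n \<Rightarrow> 'n set" where
  "block_of blk i = {j. blk j = blk i}"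

text \<open>Top-alpha filter: within its block, coordinate i is selected iff fewer than
  ceil(d_k * alpha) coordinates of the block precede it in the order
  "larger absolute value first, ties broken in favour of smaller index".\<close>
definition FLT :: "('n::{finite,linorder} \<Rightarrow> nat) \<Rightarrow> real \<Rightarrow> (real,'n) vec \<Rightarrow> (real,'n) vec" where
  "FLT blk alpha z = (\<chi> i.
     if card {j \<in> block_of blk i. \<bar>z$j\<bar> > \<bar>z$i\<bar> \<or> (\<bar>z$j\<bar> = \<bar>z$i\<bar> \<and> j < i)}
        < nat \<lceil>real (card (block_of blk i)) * alpha\<rceil>
     then 1 else 0)"

text \<open>Full-batch MoFO: state (theta_t, m_t, v_t) after t steps.  Division by zero is 0
  in Isabelle/HOL, matching the convention that the quotient is 0 when vhat = 0.\<close>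
fun mofo :: "('n::{finite,linorder} \<Rightarrow> nat) \<Rightarrow> real \<Rightarrow> ((real,'n) vec \<Rightarrow> (real,'n) vec) \<Rightarrow> real \<Rightarrow> real
   \<Rightarrow> (nat \<Rightarrow> real) \<Rightarrow> (real,'n) vec \<Rightarrow> nat \<Rightarrow> (real,'n) vec \<times> (real,'n) vec \<times> (real,'n) vec" where
  "mofo blk alpha grad b1 b2 eta th0 0 = (th0, 0, 0)"
| "mofo blk alpha grad b1 b2 eta th0 (Suc t) =
     (let (th, m, v) = mofo blk alpha grad b1 b2 eta th0 t;
          g = grad th;
          m' = (\<chi> i. b1 * m$i + (1 - b1) * g$i);
          v' = (\<chi> i. b2 * v$i + (1 - b2) * (g$i)^2);
          mh = (\<chi> i. m'$i / (1 - b1 ^ Suc t));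
          vh = (\<chi> i. v'$i / (1 - b2 ^ Suc t));
          f = FLT blk alpha m';
          th' = (\<chi> i. th$i - eta (Suc t) * (mh$i * f$i) / sqrt (vh$i))
      in (th', m', v'))"

definition mofo_theta where
  "mofo_theta blk alpha grad b1 b2 eta th0 t = fst (mofo blk alpha grad b1 b2 eta th0 t)"

end

(*
  Write g_t for the gradient at theta_t.  Since beta1^2 < beta2, the momentum satisfies
  m^2 <= A v coordinatewise, so every coordinate of the update direction is bounded and
  the t-th step has length O(eta / sqrt t); by Lipschitz continuity consecutive gradients
  differ by O(1 / sqrt t).  Hence the momentum bias m_{t+1} - (1 - beta1^{t+1}) g_t and the
  excess of sqrt v_{t+1} over sqrt (1 - beta2^{t+1}) |g_t| obey contracting recursions
  x_{t+1} <= sqrt beta2 (x_t + c / sqrt t), and are therefore O(1 / sqrt t).  Up to these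
  errors the update is sign g_t on the selected coordinates and 0 elsewhere; since the
  filter keeps, in every block, a coordinate of largest momentum, the inner product of g_t
  with the update is at least |g_t|_inf - O(1 / sqrt t).  The descent lemma then gives
  eta_t |g_t|_inf <= L(theta_t) - L(theta_{t+1}) + O(1 / t), and summing over t < T yields
  sqrt T * min_t |g_t|_inf = O(log T).
*)

theory Submission
  imports Defs
begin

section \<open>Descent lemma and decaying recursions\<close>

lemma lipschitz_gradient_descent:
  fixes f :: "'a::real_inner \<Rightarrow> real"
  assumes deriv: "\<And>x. (f has_derivative (\<lambda>h. grad x \<bullet> h)) (at x)"
    and lip: "\<And>x y. norm (grad x - grad y) \<le> Lc * norm (x - y)"
  shows "f y \<le> f x + grad x \<bullet> (y - x) + \<bar>Lc\<bar> * (norm (y - x))\<^sup>2"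
proof -
  define p where "p s = x + s *\<^sub>R (y - x)" for s :: real
  have "((\<lambda>s. f (p s)) has_real_derivative (grad (p s) \<bullet> (y - x))) (at s)" for s
    unfolding has_field_derivative_def p_def
    by (rule has_derivative_eq_rhs[OF has_derivative_compose[OF _ deriv]])
      (auto intro!: derivative_eq_intros simp: fun_eq_iff inner_scaleR_right)
  then obtain z where z: "0 < z" "z < 1" and mvt: "f (p 1) - f (p 0) = grad (p z) \<bullet> (y - x)"
    using MVT2[of 0 1 "\<lambda>s. f (p s)" "\<lambda>s. grad (p s) \<bullet> (y - x)"] by auto
  have "(grad (p z) - grad x) \<bullet> (y - x) \<le> norm (grad (p z) - grad x) * norm (y - x)"
    by (rule norm_cauchy_schwarz)
  also have "\<dots> \<le> Lc * (z * norm (y - x)) * norm (y - x)"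
    using lip[of "p z" x] z by (intro mult_right_mono) (auto simp: p_def)
  also have "\<dots> = (Lc * z) * (norm (y - x))\<^sup>2"
    by (simp add: power2_eq_square)
  also have "\<dots> \<le> \<bar>Lc\<bar> * (norm (y - x))\<^sup>2"
  proof (intro mult_right_mono)
    have "Lc * z \<le> \<bar>Lc\<bar> * z"
      using z by (intro mult_right_mono) auto
    also have "\<dots> \<le> \<bar>Lc\<bar>"
      using z by (intro mult_left_le) auto
    finally show "Lc * z \<le> \<bar>Lc\<bar>" .
  qed simp
  finally show ?thesis
    using mvt by (simp add: p_def inner_diff_left)
qed

lemma sqrt_decay_ratio_eventually_le:
  fixes \<rho> \<sigma> :: real
  assumes "0 \<le> \<rho>" "\<rho> < \<sigma>"
  obtains N where "\<And>t. N \<le> t \<Longrightarrow> \<rho> / sqrt (real (Suc t)) \<le> \<sigma> / sqrt (real (Suc (Suc t)))"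
proof -
  have gap: "0 < \<sigma>\<^sup>2 - \<rho>\<^sup>2"
    using assms by (simp add: power_strict_mono)
  obtain N :: nat where N: "\<rho>\<^sup>2 / (\<sigma>\<^sup>2 - \<rho>\<^sup>2) < real N"
    using reals_Archimedean2 by blast
  have "\<rho> / sqrt (real (Suc t)) \<le> \<sigma> / sqrt (real (Suc (Suc t)))" if "N \<le> t" for t
  proof -
    have "\<rho>\<^sup>2 < (\<sigma>\<^sup>2 - \<rho>\<^sup>2) * real N"
      using N gap by (simp add: divide_less_eq mult.commute)
    also have "\<dots> \<le> (\<sigma>\<^sup>2 - \<rho>\<^sup>2) * real (Suc t)"
      using gap that by (intro mult_left_mono) auto
    finally have "sqrt (\<rho>\<^sup>2 * real (Suc (Suc t))) \<le> sqrt (\<sigma>\<^sup>2 * real (Suc t))"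
      by (intro real_sqrt_le_mono) (simp add: algebra_simps)
    then have "\<rho> * sqrt (real (Suc (Suc t))) \<le> \<sigma> * sqrt (real (Suc t))"
      using assms by (simp add: real_sqrt_mult)
    then show ?thesis
      by (simp add: divide_simps)
  qed
  then show ?thesis using that by blast
qed

lemma sqrt_decay_induct:
  fixes x :: "nat \<Rightarrow> real"
  assumes "0 \<le> \<rho>" "0 \<le> c" "0 \<le> M" "\<sigma> * (M + c) \<le> M"
    and ratio: "\<And>t. N \<le> t \<Longrightarrow> \<rho> / sqrt (real (Suc t)) \<le> \<sigma> / sqrt (real (Suc (Suc t)))"
    and initial: "\<And>k. k \<le> N \<Longrightarrow> x k \<le> M / sqrt (real (Suc k))"
    and step: "\<And>t. x (Suc t) \<le> \<rho> * (x t + c / sqrt (real (Suc t)))"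
  shows "x t \<le> M / sqrt (real (Suc t))"
proof (induction t)
  case 0
  then show ?case using initial by blast
next
  case (Suc t)
  show ?case
  proof (cases "Suc t \<le> N")
    case True
    then show ?thesis using initial by blast
  next
    case False
    have "x (Suc t) \<le> \<rho> * (M / sqrt (real (Suc t)) + c / sqrt (real (Suc t)))"
      using step[of t] Suc.IH assms(1) by (smt (verit) mult_left_mono)
    also have "\<dots> = \<rho> / sqrt (real (Suc t)) * (M + c)"
      by (simp add: add_divide_distrib[symmetric])
    also have "\<dots> \<le> \<sigma> / sqrt (real (Suc (Suc t))) * (M + c)"
      using ratio[of t] False assms(2,3) by (intro mult_right_mono) auto
    also have "\<dots> \<le> M / sqrt (real (Suc (Suc t)))"
      using assms(4) by (simp add: divide_right_mono)
    finally show ?thesis .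
  qed
qed

lemma contracting_recursion_sqrt_decay:
  fixes x :: "nat \<Rightarrow> real"
  assumes \<rho>: "0 \<le> \<rho>" "\<rho> < 1" and c: "0 \<le> c"
    and step: "\<And>t. x (Suc t) \<le> \<rho> * (x t + c / sqrt (real (Suc t)))"
  obtains M where "0 \<le> M" "\<And>t. x t \<le> M / sqrt (real (Suc t))"
proof -
  define \<sigma> where "\<sigma> = (1 + \<rho>) / 2"
  have \<sigma>: "\<rho> < \<sigma>" "\<sigma> < 1"
    using \<rho> by (auto simp: \<sigma>_def)
  obtain N where N: "\<And>t. N \<le> t \<Longrightarrow> \<rho> / sqrt (real (Suc t)) \<le> \<sigma> / sqrt (real (Suc (Suc t)))"
    using sqrt_decay_ratio_eventually_le[OF \<rho>(1) \<sigma>(1)] by blast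
  \<comment> \<open>The first term of M is a fixed point of M \<mapsto> \<sigma> (M + c), the second covers the first N steps.\<close>
  define M where "M = max (\<sigma> * c / (1 - \<sigma>)) (\<Sum>k\<le>N. \<bar>x k\<bar> * sqrt (real (Suc k)))"
  have "0 \<le> M"
    using \<rho> \<sigma> c by (auto simp: M_def intro: max.coboundedI1)
  have "\<sigma> * c / (1 - \<sigma>) \<le> M"
    by (simp add: M_def)
  then have "\<sigma> * (M + c) \<le> M"
    using \<sigma> by (simp add: divide_le_eq algebra_simps)
  moreover have "x k \<le> M / sqrt (real (Suc k))" if "k \<le> N" for k
  proof -
    have "x k * sqrt (real (Suc k)) \<le> \<bar>x k\<bar> * sqrt (real (Suc k))"
      by (intro mult_right_mono) auto
    also have "\<dots> \<le> (\<Sum>k\<le>N. \<bar>x k\<bar> * sqrt (real (Suc k)))"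
      using that by (intro member_le_sum) auto
    finally show ?thesis
      by (simp add: M_def le_divide_eq)
  qed
  ultimately show ?thesis
    using sqrt_decay_induct[OF \<rho>(1) c \<open>0 \<le> M\<close> _ N _ step] that \<open>0 \<le> M\<close> by blast
qed

lemma harm_le_ln_plus_one:
  assumes "0 < n"
  shows "harm n \<le> ln (real n) + (1::real)"
  using euler_mascheroni_sequence_decreasing[of 1 n] assms by (simp add: harm_def)

lemma sqrt_le_sum_inverse_sqrt: "sqrt (real T) \<le> (\<Sum>t<T. 1 / sqrt (real (Suc t)))"
proof -
  have "sqrt (real T) = (\<Sum>t<T. 1 / sqrt (real T))"
    by (cases "T = 0") (simp_all add: real_div_sqrt)
  also have "\<dots> \<le> (\<Sum>t<T. 1 / sqrt (real (Suc t)))"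
    by (intro sum_mono divide_left_mono) auto
  finally show ?thesis .
qed

lemma Min_mult_sum_le_sum_mult:
  fixes x w :: "'a \<Rightarrow> real"
  assumes "finite I" "I \<noteq> {}" "\<And>i. i \<in> I \<Longrightarrow> 0 \<le> w i"
  shows "Min (x ` I) * (\<Sum>i\<in>I. w i) \<le> (\<Sum>i\<in>I. w i * x i)"
  unfolding sum_distrib_left
  using assms by (auto intro!: sum_mono simp: mult.commute intro: mult_left_mono)

lemma infnorm_cart_attained:
  fixes x :: "real^'n"
  obtains j where "infnorm x = \<bar>x $ j\<bar>"
proof -
  have "{\<bar>x $ i\<bar> |i. i \<in> UNIV} = range (\<lambda>i. \<bar>x $ i\<bar>)"
    by auto
  then have "infnorm x = Max (range (\<lambda>i. \<bar>x $ i\<bar>))"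
    unfolding infnorm_cart by (simp add: cSup_eq_Max)
  moreover have "Max (range (\<lambda>i. \<bar>x $ i\<bar>)) \<in> range (\<lambda>i. \<bar>x $ i\<bar>)"
    by (intro Max_in) auto
  ultimately show ?thesis using that by (metis rangeE)
qed

section \<open>The top-alpha filter\<close>

lemma FLT_cases: "FLT blk alpha z $ i = 0 \<or> FLT blk alpha z $ i = 1"
  by (simp add: FLT_def)

lemma FLT_selects_block_maximum:
  fixes z :: "(real,'n::{finite,linorder}) vec"
  assumes "0 < alpha"
  obtains k where "FLT blk alpha z $ k = 1" "\<bar>z $ j\<bar> \<le> \<bar>z $ k\<bar>"
proof -
  define B where "B = block_of blk j"
  have "j \<in> B"
    by (simp add: B_def block_of_def)
  define top where "top = {i \<in> B. \<forall>i' \<in> B. \<bar>z $ i'\<bar> \<le> \<bar>z $ i\<bar>}"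
  have "Max ((\<lambda>i. \<bar>z $ i\<bar>) ` B) \<in> (\<lambda>i. \<bar>z $ i\<bar>) ` B"
    using \<open>j \<in> B\<close> by (intro Max_in) auto
  then obtain i where "i \<in> B" "\<bar>z $ i\<bar> = Max ((\<lambda>i. \<bar>z $ i\<bar>) ` B)"
    by auto
  then have "top \<noteq> {}"
    by (auto simp: top_def)
  define k where "k = Min top"
  have k: "k \<in> top" "\<And>i. i \<in> top \<Longrightarrow> k \<le> i"
    using \<open>top \<noteq> {}\<close> by (simp_all add: k_def)
  have block_k: "block_of blk k = B"
    using k(1) by (auto simp: top_def B_def block_of_def)
  \<comment> \<open>k is the first coordinate of maximal magnitude in its block, so nothing precedes it.\<close>
  have preceding: "{i \<in> block_of blk k. \<bar>z $ i\<bar> > \<bar>z $ k\<bar> \<or> (\<bar>z $ i\<bar> = \<bar>z $ k\<bar> \<and> i < k)} = {}"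
    using k by (force simp: block_k top_def)
  have "0 < card (block_of blk k)"
    using block_k \<open>j \<in> B\<close> by (auto simp: card_gt_0_iff)
  then have "card {i \<in> block_of blk k. \<bar>z $ i\<bar> > \<bar>z $ k\<bar> \<or> (\<bar>z $ i\<bar> = \<bar>z $ k\<bar> \<and> i < k)}
      < nat \<lceil>real (card (block_of blk k)) * alpha\<rceil>"
    unfolding preceding using assms by simp
  then have "FLT blk alpha z $ k = 1"
    by (simp add: FLT_def)
  moreover have "\<bar>z $ j\<bar> \<le> \<bar>z $ k\<bar>"
    using k(1) \<open>j \<in> B\<close> by (simp add: top_def)
  ultimately show ?thesis using that by blast
qed

section \<open>Scalar estimates for the moment recursions\<close>

lemma ema_sq_le:
  fixes b1 b2 x y :: real
  assumes "b1\<^sup>2 < b2"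
  shows "(b1 * x + (1 - b1) * y)\<^sup>2 \<le> b2 * x\<^sup>2 + (1 - b1)\<^sup>2 * b2 / (b2 - b1\<^sup>2) * y\<^sup>2"
proof -
  define D where "D = b2 - b1\<^sup>2"
  have "0 < D"
    using assms by (simp add: D_def)
  then have "b2 * x\<^sup>2 + (1 - b1)\<^sup>2 * b2 / D * y\<^sup>2 - (b1 * x + (1 - b1) * y)\<^sup>2
      = (D * x - b1 * (1 - b1) * y)\<^sup>2 / D"
    by (simp add: field_simps D_def power2_eq_square)
  moreover have "0 \<le> (D * x - b1 * (1 - b1) * y)\<^sup>2 / D"
    using \<open>0 < D\<close> by simp
  ultimately show ?thesis
    by (simp add: D_def)
qed

definition rms_excess :: "real \<Rightarrow> real \<Rightarrow> real \<Rightarrow> real" where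
  "rms_excess s v g = max 0 (sqrt v - sqrt s * \<bar>g\<bar>)"

lemma rms_excess_nonneg: "0 \<le> rms_excess s v g"
  by (simp add: rms_excess_def)

lemma rms_excess_ema_le:
  fixes b s v g g' :: real
  assumes b: "0 \<le> b" "b \<le> 1" and s: "0 \<le> s" "s \<le> 1"
  shows "rms_excess (b * s + (1 - b)) (b * v + (1 - b) * g'\<^sup>2) g'
    \<le> sqrt b * (rms_excess s v g + \<bar>g' - g\<bar>)"
proof -
  define a where "a = sqrt s * \<bar>g'\<bar>"
  define r where "r = rms_excess s v g + \<bar>g' - g\<bar>"
  define P where "P = sqrt (b * s + (1 - b)) * \<bar>g'\<bar>"
  have "r \<ge> 0" "P \<ge> 0"
    using b s by (simp_all add: r_def P_def rms_excess_nonneg)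
  have "sqrt v \<le> sqrt s * \<bar>g\<bar> + rms_excess s v g"
    by (simp add: rms_excess_def)
  also have "sqrt s * \<bar>g\<bar> \<le> a + \<bar>g' - g\<bar>"
  proof -
    have "sqrt s * \<bar>g\<bar> \<le> sqrt s * (\<bar>g'\<bar> + \<bar>g' - g\<bar>)"
      using s by (intro mult_left_mono) auto
    also have "\<dots> \<le> a + \<bar>g' - g\<bar>"
      using s by (simp add: a_def distrib_left mult_left_le_one_le)
    finally show ?thesis .
  qed
  finally have "v \<le> (a + r)\<^sup>2"
    by (intro sqrt_le_D) (simp add: r_def)
  then have "b * v + (1 - b) * g'\<^sup>2 \<le> (sqrt b * a + sqrt b * r)\<^sup>2 + (1 - b) * g'\<^sup>2"
    using b by (simp add: power_mult_distrib distrib_left[symmetric] mult_left_mono)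
  also have "\<dots> \<le> (P + sqrt b * r)\<^sup>2"
  proof -
    have "0 \<le> b * s + (1 - b)"
      using b s by simp
    then have "P\<^sup>2 = (b * s + (1 - b)) * g'\<^sup>2"
      by (simp add: P_def power_mult_distrib)
    then have P_sq: "P\<^sup>2 = (sqrt b * a)\<^sup>2 + (1 - b) * g'\<^sup>2"
      using b s by (simp add: a_def power_mult_distrib algebra_simps)
    then have "(sqrt b * a)\<^sup>2 \<le> P\<^sup>2"
      using b by simp
    then have "sqrt b * a \<le> P"
      using \<open>P \<ge> 0\<close> by (rule power2_le_imp_le)
    then have "(sqrt b * a) * (sqrt b * r) \<le> P * (sqrt b * r)"
      using b \<open>r \<ge> 0\<close> by (intro mult_right_mono) auto
    then show ?thesis
      unfolding power2_sum using P_sq by linarith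
  qed
  finally have "sqrt (b * v + (1 - b) * g'\<^sup>2) \<le> P + sqrt b * r"
    using b \<open>r \<ge> 0\<close> \<open>P \<ge> 0\<close> by (intro real_le_lsqrt) auto
  then show ?thesis
    using b \<open>r \<ge> 0\<close> by (simp add: rms_excess_def P_def r_def)
qed

lemma debiased_rms_bounds:
  fixes s v g c2 :: real
  assumes s: "0 < c2" "c2 \<le> s" "s \<le> 1" and v: "c2 * g\<^sup>2 \<le> v"
  shows "sqrt c2 * \<bar>g\<bar> \<le> sqrt (v / s)"
    and "sqrt (v / s) \<le> \<bar>g\<bar> + rms_excess s v g / sqrt c2"
proof -
  have "c2 * g\<^sup>2 * s \<le> c2 * g\<^sup>2"
    using s by (intro mult_left_le) auto
  then have "c2 * g\<^sup>2 * s \<le> v"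
    using v by linarith
  then have "(sqrt c2 * \<bar>g\<bar>)\<^sup>2 \<le> v / s"
    using s by (simp add: power_mult_distrib le_divide_eq)
  then show "sqrt c2 * \<bar>g\<bar> \<le> sqrt (v / s)"
    by (rule real_le_rsqrt)
  have "sqrt (v / s) = sqrt v / sqrt s"
    by (simp add: real_sqrt_divide)
  also have "\<dots> \<le> (sqrt s * \<bar>g\<bar> + rms_excess s v g) / sqrt s"
    using s by (intro divide_right_mono) (auto simp: rms_excess_def)
  also have "\<dots> \<le> \<bar>g\<bar> + rms_excess s v g / sqrt c2"
    using s by (simp add: add_divide_distrib rms_excess_nonneg divide_left_mono)
  finally show "sqrt (v / s) \<le> \<bar>g\<bar> + rms_excess s v g / sqrt c2" .
qed

lemma debiased_direction_lower:
  fixes a s v g e c1 c2 :: real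
  assumes a: "0 < c1" "c1 \<le> a" and s: "0 < c2" "c2 \<le> s" "s \<le> 1" and v: "c2 * g\<^sup>2 \<le> v"
  shows "max 0 (\<bar>g\<bar> - rms_excess s v g / sqrt c2) - \<bar>e\<bar> / (c1 * sqrt c2)
    \<le> g * ((a * g + e) / a / sqrt (v / s))"
proof (cases "v = 0")
  case True
  then have "g = 0"
    using v s by (simp add: mult_le_0_iff)
  then show ?thesis
    using a s by (simp add: rms_excess_nonneg)
next
  case False
  then have "0 < v"
    using v s by (smt (verit) mult_nonneg_nonneg zero_le_power2)
  define w where "w = sqrt (v / s)"
  define R where "R = rms_excess s v g / sqrt c2"
  have "0 < w"
    using \<open>0 < v\<close> s by (simp add: w_def)
  have w: "sqrt c2 * \<bar>g\<bar> \<le> w" "w \<le> \<bar>g\<bar> + R"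
    unfolding w_def R_def using debiased_rms_bounds[OF s v] by auto
  then have "\<bar>g\<bar> / w \<le> 1 / sqrt c2"
    using s \<open>0 < w\<close> by (simp add: divide_simps mult.commute)
  moreover have "\<bar>e\<bar> / a \<le> \<bar>e\<bar> / c1"
    using a by (intro divide_left_mono) auto
  ultimately have "\<bar>g\<bar> / w * (\<bar>e\<bar> / a) \<le> 1 / sqrt c2 * (\<bar>e\<bar> / c1)"
    using a s \<open>0 < w\<close> by (intro mult_mono) auto
  then have "\<bar>(g / w) * (e / a)\<bar> \<le> \<bar>e\<bar> / (c1 * sqrt c2)"
    using a \<open>0 < w\<close> by (simp add: abs_mult mult.commute)
  then have "- (\<bar>e\<bar> / (c1 * sqrt c2)) \<le> (g / w) * (e / a)"
    using abs_ge_minus_self[of "(g / w) * (e / a)"] by linarith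
  moreover have "max 0 (\<bar>g\<bar> - R) \<le> g\<^sup>2 / w"
  proof (cases "\<bar>g\<bar> - R \<le> 0")
    case False
    then have "(\<bar>g\<bar> - R) * w \<le> (\<bar>g\<bar> - R) * (\<bar>g\<bar> + R)"
      using w(2) by (intro mult_left_mono) auto
    also have "\<dots> \<le> g\<^sup>2"
      by (simp add: power2_eq_square algebra_simps)
    finally show ?thesis
      using \<open>0 < w\<close> False by (simp add: le_divide_eq)
  qed (use \<open>0 < w\<close> in simp)
  moreover have "g * ((a * g + e) / a / w) = g\<^sup>2 / w + (g / w) * (e / a)"
    using a \<open>0 < w\<close> by (simp add: field_simps power2_eq_square)
  ultimately show ?thesis
    unfolding w_def[symmetric] R_def[symmetric] by linarith
qed

section \<open>Trajectories of full-batch MoFO\<close>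

locale mofo_run =
  fixes \<L> :: "(real,'n::{finite,linorder}) vec \<Rightarrow> real"
    and grad :: "(real,'n) vec \<Rightarrow> (real,'n) vec"
    and blk :: "'n \<Rightarrow> nat"
    and Lc alpha b1 b2 eta :: real
    and th0 :: "(real,'n) vec"
  assumes deriv: "\<And>x. (\<L> has_derivative (\<lambda>h. grad x \<bullet> h)) (at x)"
    and lipschitz: "\<And>x y. norm (grad x - grad y) \<le> Lc * norm (x - y)"
    and alpha: "0 < alpha"
    and betas: "0 < b1" "b1 < sqrt b2" "sqrt b2 < 1"
    and eta: "0 < eta"
begin

definition "state t = mofo blk alpha grad b1 b2 (\<lambda>t. eta / sqrt (real t)) th0 t"
definition "\<theta> t = mofo_theta blk alpha grad b1 b2 (\<lambda>t. eta / sqrt (real t)) th0 t"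
definition "m t = fst (snd (state t))"
definition "v t = snd (snd (state t))"

text \<open>\<open>g t\<close> is the gradient at \<open>\<theta> t\<close>, which enters \<open>m (Suc t)\<close> and \<open>v (Suc t)\<close>:
  it is the paper's g_{t+1}.\<close>
definition "g t = grad (\<theta> t)"
definition "dir t = (\<chi> i. (m t $ i / (1 - b1 ^ t) * FLT blk alpha (m t) $ i) / sqrt (v t $ i / (1 - b2 ^ t)))"

lemma m_0: "m 0 = 0" and v_0: "v 0 = 0"
  by (simp_all add: m_def v_def state_def)

lemma m_Suc: "m (Suc t) $ i = b1 * m t $ i + (1 - b1) * g t $ i"
  by (simp add: m_def g_def \<theta>_def mofo_theta_def state_def Let_def case_prod_unfold)

lemma v_Suc: "v (Suc t) $ i = b2 * v t $ i + (1 - b2) * (g t $ i)\<^sup>2"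
  by (simp add: v_def g_def \<theta>_def mofo_theta_def state_def Let_def case_prod_unfold)

lemma theta_Suc: "\<theta> (Suc t) = \<theta> t - (eta / sqrt (real (Suc t))) *\<^sub>R dir (Suc t)"
  by (simp add: vec_eq_iff \<theta>_def mofo_theta_def m_def v_def dir_def state_def Let_def case_prod_unfold)

lemma betas_bounds: "b1 < 1" "0 < b2" "b2 < 1" "b1\<^sup>2 < b2"
proof -
  show "b1 < 1"
    using betas by linarith
  show "b2 < 1"
    using betas by (simp add: real_sqrt_less_iff)
  have "0 < sqrt b2"
    using betas by linarith
  then show "0 < b2"
    by simp
  have "b1\<^sup>2 < (sqrt b2)\<^sup>2"
    using betas by (intro power_strict_mono) auto
  then show "b1\<^sup>2 < b2"
    using \<open>0 < b2\<close> by simp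
qed

lemma v_nonneg: "0 \<le> v t $ i"
  using betas_bounds by (induction t) (auto simp: v_0 v_Suc)

lemma bias_correction_bounds:
  "1 - b1 \<le> 1 - b1 ^ Suc t" "1 - b1 ^ Suc t \<le> 1" "1 - b2 \<le> 1 - b2 ^ Suc t" "1 - b2 ^ Suc t \<le> 1"
  using betas betas_bounds power_decreasing[of 1 "Suc t" b1] power_decreasing[of 1 "Suc t" b2]
  by auto

definition "mom_ratio = (1 - b1)\<^sup>2 * b2 / ((b2 - b1\<^sup>2) * (1 - b2))"

lemma m_sq_le: "(m t $ i)\<^sup>2 \<le> mom_ratio * v t $ i"
proof (induction t)
  case 0
  then show ?case by (simp add: m_0 v_0)
next
  case (Suc t)
  have "(m (Suc t) $ i)\<^sup>2 \<le> b2 * (m t $ i)\<^sup>2 + mom_ratio * (1 - b2) * (g t $ i)\<^sup>2"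
    using ema_sq_le[OF betas_bounds(4)] betas_bounds by (simp add: m_Suc mom_ratio_def)
  also have "\<dots> \<le> b2 * (mom_ratio * v t $ i) + mom_ratio * (1 - b2) * (g t $ i)\<^sup>2"
    using Suc betas_bounds by (intro add_right_mono mult_left_mono) auto
  also have "\<dots> = mom_ratio * v (Suc t) $ i"
    by (simp add: v_Suc algebra_simps)
  finally show ?case .
qed

definition "dir_bound = sqrt mom_ratio / (1 - b1)"

lemma abs_dir_le: "\<bar>dir (Suc t) $ i\<bar> \<le> dir_bound"
proof (cases "v (Suc t) $ i = 0")
  case True
  then show ?thesis
    using betas_bounds by (simp add: dir_def dir_bound_def mom_ratio_def)
next
  case False
  then have v: "0 < v (Suc t) $ i"
    using v_nonneg[of "Suc t" i] by simp
  have m: "\<bar>m (Suc t) $ i\<bar> \<le> sqrt mom_ratio * sqrt (v (Suc t) $ i)"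
    using m_sq_le[of "Suc t" i] by (metis real_le_rsqrt power2_abs real_sqrt_mult)
  have pos: "0 < 1 - b1 ^ Suc t" "0 < 1 - b2 ^ Suc t"
    using bias_correction_bounds[of t] betas_bounds by linarith+
  have "\<bar>dir (Suc t) $ i\<bar> = \<bar>m (Suc t) $ i\<bar> / (1 - b1 ^ Suc t) * \<bar>FLT blk alpha (m (Suc t)) $ i\<bar>
      / (sqrt (v (Suc t) $ i) / sqrt (1 - b2 ^ Suc t))"
    using pos v
    by (simp add: dir_def abs_mult real_sqrt_divide)
  also have "\<dots> \<le> (sqrt mom_ratio * sqrt (v (Suc t) $ i)) / (1 - b1) * 1 / (sqrt (v (Suc t) $ i) / 1)"
    using bias_correction_bounds[of t] betas_bounds pos v m FLT_cases[of blk alpha "m (Suc t)" i]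
    by (intro divide_mono mult_mono frac_le) auto
  also have "\<dots> = dir_bound"
    using v by (simp add: dir_bound_def)
  finally show ?thesis .
qed

lemma norm_theta_step_le: "norm (\<theta> (Suc t) - \<theta> t) \<le> eta / sqrt (real (Suc t)) * (CARD('n) * dir_bound)"
proof -
  have "norm (dir (Suc t)) \<le> (\<Sum>i\<in>UNIV. \<bar>dir (Suc t) $ i\<bar>)"
    by (rule norm_le_l1_cart)
  also have "\<dots> \<le> CARD('n) * dir_bound"
    using sum_mono[of UNIV "\<lambda>i. \<bar>dir (Suc t) $ i\<bar>" "\<lambda>_. dir_bound"] abs_dir_le by simp
  finally have "eta / sqrt (real (Suc t)) * norm (dir (Suc t))
      \<le> eta / sqrt (real (Suc t)) * (CARD('n) * dir_bound)"
    using eta by (intro mult_left_mono) auto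
  then show ?thesis
    using eta by (simp add: theta_Suc)
qed

definition "grad_drift = \<bar>Lc\<bar> * eta * (CARD('n) * dir_bound)"

lemma abs_g_Suc_diff_le: "\<bar>g (Suc t) $ i - g t $ i\<bar> \<le> grad_drift / sqrt (real (Suc t))"
proof -
  have "\<bar>g (Suc t) $ i - g t $ i\<bar> \<le> norm (g (Suc t) - g t)"
    using component_le_norm_cart[of "g (Suc t) - g t" i] by simp
  also have "\<dots> \<le> \<bar>Lc\<bar> * norm (\<theta> (Suc t) - \<theta> t)"
    using lipschitz[of "\<theta> (Suc t)" "\<theta> t"] abs_ge_self[of Lc]
    by (smt (verit) g_def mult_right_mono norm_ge_zero)
  also have "\<dots> \<le> grad_drift / sqrt (real (Suc t))"
    using mult_left_mono[OF norm_theta_step_le, of "\<bar>Lc\<bar>" t] by (simp add: grad_drift_def)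
  finally show ?thesis .
qed


definition "mom_bias t i = m (Suc t) $ i - (1 - b1 ^ Suc t) * g t $ i"
definition "v_excess t i = rms_excess (1 - b2 ^ Suc t) (v (Suc t) $ i) (g t $ i)"
definition "bias_err t = (\<Sum>i\<in>UNIV. \<bar>mom_bias t i\<bar> + v_excess t i)"

lemma abs_mom_bias_Suc_le:
  "\<bar>mom_bias (Suc t) i\<bar> \<le> b1 * (\<bar>mom_bias t i\<bar> + grad_drift / sqrt (real (Suc t)))"
proof -
  have "0 \<le> 1 - b1 ^ Suc t" "1 - b1 ^ Suc t \<le> 1"
    using bias_correction_bounds[of t] betas_bounds by linarith+
  then have "\<bar>(1 - b1 ^ Suc t) * (g t $ i - g (Suc t) $ i)\<bar> \<le> \<bar>g (Suc t) $ i - g t $ i\<bar>"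
    unfolding abs_mult by (simp add: abs_minus_commute mult_left_le_one_le)
  then have "\<bar>mom_bias t i + (1 - b1 ^ Suc t) * (g t $ i - g (Suc t) $ i)\<bar>
      \<le> \<bar>mom_bias t i\<bar> + grad_drift / sqrt (real (Suc t))"
    using abs_triangle_ineq[of "mom_bias t i" "(1 - b1 ^ Suc t) * (g t $ i - g (Suc t) $ i)"]
      abs_g_Suc_diff_le[of t i] by linarith
  moreover have "mom_bias (Suc t) i = b1 * (mom_bias t i + (1 - b1 ^ Suc t) * (g t $ i - g (Suc t) $ i))"
    unfolding mom_bias_def m_Suc[of "Suc t"] by (simp add: algebra_simps)
  ultimately show ?thesis
    using betas by (simp add: abs_mult mult_left_mono)
qed

lemma v_excess_Suc_le:
  "v_excess (Suc t) i \<le> sqrt b2 * (v_excess t i + grad_drift / sqrt (real (Suc t)))"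
proof -
  have ema: "b2 * (1 - b2 ^ Suc t) + (1 - b2) = 1 - b2 ^ Suc (Suc t)"
    by (simp add: algebra_simps)
  have "rms_excess (b2 * (1 - b2 ^ Suc t) + (1 - b2))
      (b2 * v (Suc t) $ i + (1 - b2) * (g (Suc t) $ i)\<^sup>2) (g (Suc t) $ i)
    \<le> sqrt b2 * (rms_excess (1 - b2 ^ Suc t) (v (Suc t) $ i) (g t $ i) + \<bar>g (Suc t) $ i - g t $ i\<bar>)"
    using betas_bounds bias_correction_bounds[of t] by (intro rms_excess_ema_le) linarith+
  then have "v_excess (Suc t) i \<le> sqrt b2 * (v_excess t i + \<bar>g (Suc t) $ i - g t $ i\<bar>)"
    unfolding v_excess_def ema v_Suc[symmetric] .
  also have "\<dots> \<le> sqrt b2 * (v_excess t i + grad_drift / sqrt (real (Suc t)))"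
    using abs_g_Suc_diff_le[of t i] betas_bounds by (intro mult_left_mono) auto
  finally show ?thesis .
qed

lemma bias_err_Suc_le:
  "bias_err (Suc t) \<le> sqrt b2 * (bias_err t + real CARD('n) * (2 * grad_drift) / sqrt (real (Suc t)))"
proof -
  have "\<bar>mom_bias (Suc t) i\<bar> + v_excess (Suc t) i
      \<le> sqrt b2 * (\<bar>mom_bias t i\<bar> + v_excess t i + 2 * (grad_drift / sqrt (real (Suc t))))" for i
  proof -
    have "b1 * (\<bar>mom_bias t i\<bar> + grad_drift / sqrt (real (Suc t)))
        \<le> sqrt b2 * (\<bar>mom_bias t i\<bar> + grad_drift / sqrt (real (Suc t)))"
      using betas abs_g_Suc_diff_le[of t i] by (intro mult_right_mono) auto
    moreover have "sqrt b2 * (\<bar>mom_bias t i\<bar> + grad_drift / sqrt (real (Suc t)))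
        + sqrt b2 * (v_excess t i + grad_drift / sqrt (real (Suc t)))
      = sqrt b2 * (\<bar>mom_bias t i\<bar> + v_excess t i + 2 * (grad_drift / sqrt (real (Suc t))))"
      by (simp add: algebra_simps)
    ultimately show ?thesis
      using abs_mom_bias_Suc_le[of t i] v_excess_Suc_le[of t i] by linarith
  qed
  then have "bias_err (Suc t)
      \<le> (\<Sum>i\<in>UNIV. sqrt b2 * (\<bar>mom_bias t i\<bar> + v_excess t i + 2 * (grad_drift / sqrt (real (Suc t)))))"
    unfolding bias_err_def by (intro sum_mono)
  also have "\<dots> = sqrt b2 * (bias_err t + real CARD('n) * (2 * grad_drift) / sqrt (real (Suc t)))"
    by (simp only: bias_err_def sum_distrib_left[symmetric] sum.distrib sum_constant times_divide_eq_right)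
  finally show ?thesis .
qed

lemma bias_err_decay:
  obtains M where "0 \<le> M" "\<And>t. bias_err t \<le> M / sqrt (real (Suc t))"
proof -
  have \<rho>: "0 \<le> sqrt b2" "sqrt b2 < 1"
    using betas by linarith+
  have c: "0 \<le> real CARD('n) * (2 * grad_drift)"
    using eta betas_bounds by (simp add: grad_drift_def dir_bound_def mom_ratio_def)
  show ?thesis
    using contracting_recursion_sqrt_decay[OF \<rho> c bias_err_Suc_le] that by blast
qed


definition "coord_err t i = v_excess t i / sqrt (1 - b2) + \<bar>mom_bias t i\<bar> / ((1 - b1) * sqrt (1 - b2))"

lemma g_dir_coord_lower:
  shows "- coord_err t i \<le> g t $ i * dir (Suc t) $ i"
    and "FLT blk alpha (m (Suc t)) $ i = 1 \<Longrightarrow> \<bar>g t $ i\<bar> - coord_err t i \<le> g t $ i * dir (Suc t) $ i"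
proof -
  have v_lower: "(1 - b2) * (g t $ i)\<^sup>2 \<le> v (Suc t) $ i"
    using v_nonneg[of t i] betas_bounds by (simp add: v_Suc)
  have "max 0 (\<bar>g t $ i\<bar> - v_excess t i / sqrt (1 - b2)) - \<bar>mom_bias t i\<bar> / ((1 - b1) * sqrt (1 - b2))
      \<le> g t $ i * (((1 - b1 ^ Suc t) * g t $ i + mom_bias t i) / (1 - b1 ^ Suc t)
        / sqrt (v (Suc t) $ i / (1 - b2 ^ Suc t)))"
    unfolding v_excess_def
    by (intro debiased_direction_lower v_lower) (use bias_correction_bounds[of t] betas_bounds in linarith)+
  also have "(1 - b1 ^ Suc t) * g t $ i + mom_bias t i = m (Suc t) $ i"
    by (simp add: mom_bias_def)
  finally have "FLT blk alpha (m (Suc t)) $ i = 1 \<Longrightarrow>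
      max 0 (\<bar>g t $ i\<bar> - v_excess t i / sqrt (1 - b2)) - \<bar>mom_bias t i\<bar> / ((1 - b1) * sqrt (1 - b2))
      \<le> g t $ i * dir (Suc t) $ i"
    by (simp add: dir_def)
  moreover have "FLT blk alpha (m (Suc t)) $ i = 0 \<Longrightarrow> g t $ i * dir (Suc t) $ i = 0"
    by (simp add: dir_def)
  moreover have "0 \<le> v_excess t i / sqrt (1 - b2)" "0 \<le> \<bar>mom_bias t i\<bar> / ((1 - b1) * sqrt (1 - b2))"
    using betas_bounds by (simp_all add: v_excess_def rms_excess_nonneg)
  ultimately show "- coord_err t i \<le> g t $ i * dir (Suc t) $ i"
    and "FLT blk alpha (m (Suc t)) $ i = 1 \<Longrightarrow> \<bar>g t $ i\<bar> - coord_err t i \<le> g t $ i * dir (Suc t) $ i"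
    using FLT_cases[of blk alpha "m (Suc t)" i] by (auto simp: coord_err_def)
qed

lemma abs_g_le_of_abs_m_le:
  assumes "\<bar>m (Suc t) $ j\<bar> \<le> \<bar>m (Suc t) $ k\<bar>"
  shows "\<bar>g t $ j\<bar> \<le> \<bar>g t $ k\<bar> + (\<bar>mom_bias t j\<bar> + \<bar>mom_bias t k\<bar>) / (1 - b1)"
proof (cases "\<bar>g t $ j\<bar> \<le> \<bar>g t $ k\<bar>")
  case True
  then show ?thesis
    using betas_bounds by (simp add: add_increasing2)
next
  case False
  define a where "a = 1 - b1 ^ Suc t"
  have a: "1 - b1 \<le> a" "0 < 1 - b1"
    using bias_correction_bounds[of t] betas_bounds by (simp_all add: a_def)
  have "a * \<bar>g t $ j\<bar> - \<bar>mom_bias t j\<bar> \<le> \<bar>m (Suc t) $ j\<bar>"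
    using a abs_triangle_ineq2[of "a * g t $ j" "- mom_bias t j"]
    by (simp add: mom_bias_def a_def abs_mult)
  also have "\<dots> \<le> \<bar>m (Suc t) $ k\<bar>"
    by (rule assms)
  also have "\<dots> \<le> a * \<bar>g t $ k\<bar> + \<bar>mom_bias t k\<bar>"
    using a abs_triangle_ineq[of "a * g t $ k" "mom_bias t k"]
    by (simp add: mom_bias_def a_def abs_mult)
  finally have "a * (\<bar>g t $ j\<bar> - \<bar>g t $ k\<bar>) \<le> \<bar>mom_bias t j\<bar> + \<bar>mom_bias t k\<bar>"
    by (simp add: algebra_simps)
  moreover have "(1 - b1) * (\<bar>g t $ j\<bar> - \<bar>g t $ k\<bar>) \<le> a * (\<bar>g t $ j\<bar> - \<bar>g t $ k\<bar>)"
    using a False by (intro mult_right_mono) auto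
  ultimately show ?thesis
    using a by (simp add: field_simps)
qed

lemma inner_g_dir_lower_selected:
  assumes "FLT blk alpha (m (Suc t)) $ k = 1"
  shows "\<bar>g t $ k\<bar> - (\<Sum>i\<in>UNIV. coord_err t i) \<le> g t \<bullet> dir (Suc t)"
proof -
  have "\<bar>g t $ k\<bar> - coord_err t k + (\<Sum>i\<in>UNIV - {k}. - coord_err t i)
      \<le> g t $ k * dir (Suc t) $ k + (\<Sum>i\<in>UNIV - {k}. g t $ i * dir (Suc t) $ i)"
    using g_dir_coord_lower[of t] assms by (intro add_mono sum_mono) auto
  then show ?thesis
    by (simp add: inner_vec_def sum.remove[of UNIV k] sum_negf)
qed

definition "err_const = 2 / (1 - b1) + 1 / ((1 - b1) * sqrt (1 - b2)) + 1 / sqrt (1 - b2)"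

lemma inner_g_dir_lower: "infnorm (g t) - err_const * bias_err t \<le> g t \<bullet> dir (Suc t)"
proof -
  obtain j where j: "infnorm (g t) = \<bar>g t $ j\<bar>"
    using infnorm_cart_attained by blast
  obtain k where k: "FLT blk alpha (m (Suc t)) $ k = 1" "\<bar>m (Suc t) $ j\<bar> \<le> \<bar>m (Suc t) $ k\<bar>"
    using FLT_selects_block_maximum[OF alpha] by blast
  define SE where "SE = (\<Sum>i\<in>UNIV. \<bar>mom_bias t i\<bar>)"
  define SR where "SR = (\<Sum>i\<in>UNIV. v_excess t i)"
  define q where "q = sqrt (1 - b2)"
  have pos: "0 < 1 - b1" "0 < q" "0 \<le> SE" "0 \<le> SR"
    using betas_bounds by (auto simp: q_def SE_def SR_def v_excess_def rms_excess_nonneg intro: sum_nonneg)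
  have "\<bar>mom_bias t j\<bar> \<le> SE" "\<bar>mom_bias t k\<bar> \<le> SE"
    unfolding SE_def by (intro member_le_sum; simp)+
  then have "\<bar>mom_bias t j\<bar> + \<bar>mom_bias t k\<bar> \<le> 2 * SE"
    by linarith
  then have "(\<bar>mom_bias t j\<bar> + \<bar>mom_bias t k\<bar>) / (1 - b1) \<le> 2 / (1 - b1) * SE"
    using pos by (simp add: divide_right_mono)
  then have "infnorm (g t) \<le> \<bar>g t $ k\<bar> + 2 / (1 - b1) * SE"
    using j abs_g_le_of_abs_m_le[OF k(2)] by linarith
  moreover have "(\<Sum>i\<in>UNIV. coord_err t i) = SR / q + SE / ((1 - b1) * q)"
    by (simp add: coord_err_def SE_def SR_def q_def sum.distrib sum_divide_distrib)
  moreover have "2 / (1 - b1) * SE + (SR / q + SE / ((1 - b1) * q)) \<le> err_const * bias_err t"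
  proof -
    have "bias_err t = SE + SR"
      by (simp add: bias_err_def SE_def SR_def sum.distrib)
    then have "err_const * bias_err t
        = 2 / (1 - b1) * SE + (SR / q + SE / ((1 - b1) * q)) + (SE / q + 2 / (1 - b1) * SR + SR / ((1 - b1) * q))"
      by (simp add: err_const_def q_def[symmetric] add_divide_distrib distrib_left distrib_right)
    moreover have "0 \<le> SE / q + 2 / (1 - b1) * SR + SR / ((1 - b1) * q)"
      using pos by simp
    ultimately show ?thesis
      by linarith
  qed
  ultimately show ?thesis
    using inner_g_dir_lower_selected[OF k(1)] by linarith
qed


lemma descent_step:
  assumes M: "\<And>t. bias_err t \<le> M / sqrt (real (Suc t))"
  shows "eta / sqrt (real (Suc t)) * infnorm (g t)
    \<le> \<L> (\<theta> t) - \<L> (\<theta> (Suc t))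
      + (eta * err_const * M + \<bar>Lc\<bar> * eta\<^sup>2 * (CARD('n) * dir_bound)\<^sup>2) / real (Suc t)"
proof -
  define h where "h = eta / sqrt (real (Suc t))"
  have "0 < h"
    using eta by (simp add: h_def)
  have "\<L> (\<theta> (Suc t)) \<le> \<L> (\<theta> t) + g t \<bullet> (\<theta> (Suc t) - \<theta> t) + \<bar>Lc\<bar> * (norm (\<theta> (Suc t) - \<theta> t))\<^sup>2"
    unfolding g_def by (rule lipschitz_gradient_descent[OF deriv lipschitz])
  moreover have "g t \<bullet> (\<theta> (Suc t) - \<theta> t) = - h * (g t \<bullet> dir (Suc t))"
    by (simp add: theta_Suc h_def)
  moreover have "h * infnorm (g t) \<le> h * (g t \<bullet> dir (Suc t) + err_const * bias_err t)"
    using inner_g_dir_lower[of t] \<open>0 < h\<close> by (intro mult_left_mono) auto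
  then have "h * infnorm (g t) \<le> h * (g t \<bullet> dir (Suc t)) + h * (err_const * bias_err t)"
    by (simp add: distrib_left)
  moreover have "h * (err_const * bias_err t) \<le> eta * err_const * M / real (Suc t)"
  proof -
    have "0 \<le> err_const"
      using betas_bounds by (simp add: err_const_def)
    then have "h * (err_const * bias_err t) \<le> h * (err_const * (M / sqrt (real (Suc t))))"
      using M[of t] \<open>0 < h\<close> by (intro mult_left_mono) auto
    then show ?thesis
      by (simp add: h_def)
  qed
  moreover have "\<bar>Lc\<bar> * (norm (\<theta> (Suc t) - \<theta> t))\<^sup>2 \<le> \<bar>Lc\<bar> * eta\<^sup>2 * (CARD('n) * dir_bound)\<^sup>2 / real (Suc t)"
  proof -
    have "\<bar>Lc\<bar> * (norm (\<theta> (Suc t) - \<theta> t))\<^sup>2 \<le> \<bar>Lc\<bar> * (h * (CARD('n) * dir_bound))\<^sup>2"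
      using norm_theta_step_le[of t] by (intro mult_left_mono power_mono) (auto simp: h_def)
    also have "\<dots> = \<bar>Lc\<bar> * eta\<^sup>2 * (CARD('n) * dir_bound)\<^sup>2 / real (Suc t)"
      by (simp add: h_def power_mult_distrib power_divide)
    finally show ?thesis .
  qed
  ultimately have "h * infnorm (g t) \<le> \<L> (\<theta> t) - \<L> (\<theta> (Suc t))
      + eta * err_const * M / real (Suc t) + \<bar>Lc\<bar> * eta\<^sup>2 * (CARD('n) * dir_bound)\<^sup>2 / real (Suc t)"
    by linarith
  then show ?thesis
    by (simp only: h_def add_divide_distrib add.assoc)
qed

lemma weighted_infnorm_g_sum_le:
  obtains C where "0 \<le> C"
    "\<And>T. (\<Sum>t<T. eta / sqrt (real (Suc t)) * infnorm (g t)) \<le> \<L> (\<theta> 0) - \<L> (\<theta> T) + C * harm T"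
proof -
  obtain M where M: "0 \<le> M" "\<And>t. bias_err t \<le> M / sqrt (real (Suc t))"
    using bias_err_decay by blast
  define C where "C = eta * err_const * M + \<bar>Lc\<bar> * eta\<^sup>2 * (CARD('n) * dir_bound)\<^sup>2"
  have "0 \<le> C"
    using eta M betas_bounds by (simp add: C_def err_const_def)
  have "(\<Sum>t<T. eta / sqrt (real (Suc t)) * infnorm (g t))
      \<le> (\<Sum>t<T. (\<L> (\<theta> t) - \<L> (\<theta> (Suc t))) + C * inverse (real (Suc t)))" for T
    using descent_step[OF M(2)] by (intro sum_mono) (simp add: C_def divide_inverse)
  also have "\<dots> T = \<L> (\<theta> 0) - \<L> (\<theta> T) + C * harm T" for T
    by (simp add: sum.distrib sum_lessThan_telescope'[of "\<lambda>t. \<L> (\<theta> t)"] harm_altdef sum_distrib_left)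
  finally show ?thesis
    using that \<open>0 \<le> C\<close> by blast
qed

lemma min_infnorm_g_le:
  assumes lower: "\<And>x. Lstar \<le> \<L> x"
  obtains C where
    "\<And>T. 3 \<le> T \<Longrightarrow> Min ((\<lambda>t. infnorm (g t)) ` {..<T}) \<le> C * (ln (real T) / sqrt (real T))"
proof -
  obtain C where C: "0 \<le> C"
    "\<And>T. (\<Sum>t<T. eta / sqrt (real (Suc t)) * infnorm (g t)) \<le> \<L> (\<theta> 0) - \<L> (\<theta> T) + C * harm T"
    using weighted_infnorm_g_sum_le by blast
  define B where "B = \<L> (\<theta> 0) - Lstar"
  have "0 \<le> B"
    using lower by (simp add: B_def)
  have "Min ((\<lambda>t. infnorm (g t)) ` {..<T}) \<le> (B + 2 * C) / eta * (ln (real T) / sqrt (real T))"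
    if T: "3 \<le> T" for T
  proof -
    have "0 \<in> {..<T}"
      using T by simp
    then have "{..<T} \<noteq> {}"
      by blast
    define mn where "mn = Min ((\<lambda>t. infnorm (g t)) ` {..<T})"
    have "0 \<le> mn"
      using \<open>{..<T} \<noteq> {}\<close> unfolding mn_def by (subst Min_ge_iff) (auto simp: infnorm_pos_le)
    have "1 \<le> ln (real T)"
      using T exp_le by (simp add: ln_ge_iff)
    have "eta * sqrt (real T) \<le> (\<Sum>t<T. eta / sqrt (real (Suc t)))"
      using mult_left_mono[OF sqrt_le_sum_inverse_sqrt[of T], of eta] eta
      by (simp add: sum_distrib_left)
    then have "eta * sqrt (real T) * mn \<le> (\<Sum>t<T. eta / sqrt (real (Suc t))) * mn"
      using \<open>0 \<le> mn\<close> by (rule mult_right_mono)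
    also have "\<dots> \<le> (\<Sum>t<T. eta / sqrt (real (Suc t)) * infnorm (g t))"
      unfolding mn_def using \<open>{..<T} \<noteq> {}\<close> eta
      by (subst mult.commute) (intro Min_mult_sum_le_sum_mult; auto)
    also have "\<dots> \<le> B + C * (ln (real T) + 1)"
    proof -
      have "C * harm T \<le> C * (ln (real T) + 1)"
        using harm_le_ln_plus_one[of T] T C(1) by (intro mult_left_mono) auto
      then show ?thesis
        using C(2)[of T] lower[of "\<theta> T"] by (simp add: B_def)
    qed
    also have "\<dots> \<le> (B + 2 * C) * ln (real T)"
      using mult_left_mono[OF \<open>1 \<le> ln (real T)\<close> \<open>0 \<le> B\<close>]
        mult_left_mono[OF \<open>1 \<le> ln (real T)\<close> C(1)]
      by (simp add: algebra_simps)
    finally show ?thesis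
      using eta T by (simp add: mn_def field_simps)
  qed
  then show ?thesis
    using that by blast
qed

end

theorem theorem1:
  fixes \<L> :: "(real,'n::{finite,linorder}) vec \<Rightarrow> real"
    and grad :: "(real,'n) vec \<Rightarrow> (real,'n) vec"
    and blk :: "'n \<Rightarrow> nat"
    and Lstar Lc alpha b1 b2 eta :: real
    and th0 :: "(real,'n) vec"
  assumes deriv: "\<And>x. (\<L> has_derivative (\<lambda>h. grad x \<bullet> h)) (at x)"
    and lower: "\<And>x. Lstar \<le> \<L> x"
    and lipschitz: "\<And>x y. norm (grad x - grad y) \<le> Lc * norm (x - y)"
    and blocks: "mono blk"
    and alpha: "0 < alpha" "alpha \<le> 1"
    and betas: "0 < b1" "b1 < sqrt b2" "sqrt b2 < 1"
    and eta: "0 < eta"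
  shows "(\<lambda>T::nat. Min ((\<lambda>t. infnorm (grad (mofo_theta blk alpha grad b1 b2
              (\<lambda>t. eta / sqrt (real t)) th0 t))) ` {..<T}))
         \<in> O(\<lambda>T. ln (real T) / sqrt (real T))"
proof -
  interpret mofo_run \<L> grad blk Lc alpha b1 b2 eta th0
    using deriv lipschitz alpha(1) betas eta by unfold_locales
  obtain C where C: "\<And>T. 3 \<le> T \<Longrightarrow> Min ((\<lambda>t. infnorm (g t)) ` {..<T}) \<le> C * (ln (real T) / sqrt (real T))"
    using min_infnorm_g_le[OF lower] by blast
  have "\<forall>\<^sub>F T in at_top. norm (Min ((\<lambda>t. infnorm (g t)) ` {..<T})) \<le> C * norm (ln (real T) / sqrt (real T))"
    unfolding eventually_at_top_linorder
  proof (intro exI[of _ 3] allI impI)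
    fix T :: nat
    assume "3 \<le> T"
    then have "0 \<le> Min ((\<lambda>t. infnorm (g t)) ` {..<T})"
      by (subst Min_ge_iff) (auto simp: infnorm_pos_le lessThan_empty_iff)
    then show "norm (Min ((\<lambda>t. infnorm (g t)) ` {..<T})) \<le> C * norm (ln (real T) / sqrt (real T))"
      using C[OF \<open>3 \<le> T\<close>] \<open>3 \<le> T\<close> by simp
  qed
  then show ?thesis
    unfolding g_def \<theta>_def by (rule bigoI)
qed

end
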